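(* Let $\alpha\in[0,1]$. If $f(z)=z+\sum_{n\ge2}a_nz^n$ is analytic on $\mathbb{U}$ and $\operatorname{Re}\big(1+\frac{zf''(z)}{f'(z)}\big)>\alpha$ for all $z\in\mathbb{U}$ (i.e. $f$ is convex of order $\alpha$), then $$|a_3^2-a_4^2|\le\frac{(1-\alpha)^2(3-2\alpha)^2}{9}+\frac{(1-\alpha)^2(2-\alpha)^2(3-2\alpha)^2}{36}.$$
   Context: $\mathbb{U}$ is the open unit disk. *)

theory Defs
  imports "HOL-Complex_Analysis.Complex_Analysis"
begin

definition taylor_coeff :: "(complex \<Rightarrow> complex) \<Rightarrow> nat \<Rightarrow> complex" where
  "taylor_coeff f n = (deriv ^^ n) f 0 / of_nat (fact n)"

end

theory Submission
  imports Defs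
begin

(* Let q(z) = z f''(z) / f'(z). Then q + 1 - \<alpha> has positive real part and value 1 - \<alpha> at 0,
   so by Caratheodory's lemma its Taylor coefficients c_k (k > 0) satisfy |c_k| \<le> 2 (1 - \<alpha>).
   Comparing Taylor coefficients in z f'' = q f' expresses a_2, a_3, a_4 through c_1, c_2, c_3,
   which bounds |a_3| and |a_4|; finally |a_3^2 - a_4^2| \<le> |a_3|^2 + |a_4|^2. *)

lemma has_contour_integral_circlepath_0_iff:
  assumes "r \<noteq> 0"
  shows "((\<lambda>u. g u / u) has_contour_integral (2 * pi * \<i> * I)) (circlepath 0 r)
    \<longleftrightarrow> ((\<lambda>t. g (circlepath 0 r t)) has_integral I) {0..1}"
proof -
  have "g (circlepath 0 r t) / circlepath 0 r t
        * vector_derivative (circlepath 0 r) (at t within {0..1})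
      = 2 * pi * \<i> * g (circlepath 0 r t)" if "t \<in> {0..1}" for t
    using that assms by (simp add: vector_derivative_circlepath01) (simp add: circlepath)
  then have "((\<lambda>u. g u / u) has_contour_integral (2 * pi * \<i> * I)) (circlepath 0 r)
      \<longleftrightarrow> ((\<lambda>t. 2 * pi * \<i> * g (circlepath 0 r t)) has_integral (2 * pi * \<i> * I)) {0..1}"
    unfolding has_contour_integral_def by (intro has_integral_cong) auto
  then show ?thesis
    by (simp add: has_integral_mult_right_iff)
qed

lemma circlepath_integral_taylor_coeff:
  assumes "h holomorphic_on ball 0 1" "0 < r" "r < 1"
  shows "((\<lambda>t. h (circlepath 0 r t) / circlepath 0 r t ^ k) has_integral taylor_coeff h k) {0..1}"
proof -
  have "h holomorphic_on cball 0 r"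
    using assms by (auto intro: holomorphic_on_subset)
  then have "((\<lambda>u. h u / u ^ Suc k) has_contour_integral (2 * pi * \<i> * taylor_coeff h k))
      (circlepath 0 r)"
    using Cauchy_has_contour_integral_higher_derivative_circlepath[of 0 r h 0 k] \<open>0 < r\<close>
    by (simp add: holomorphic_on_imp_continuous_on holomorphic_on_subset taylor_coeff_def)
  moreover have "(\<lambda>u. h u / u ^ Suc k) = (\<lambda>u. h u / u ^ k / u)"
    by (simp add: field_simps)
  ultimately show ?thesis
    using has_contour_integral_circlepath_0_iff[of r "\<lambda>u. h u / u ^ k"] \<open>0 < r\<close> by simp
qed

lemma circlepath_integral_times_power_eq_0:
  assumes "h holomorphic_on ball 0 1" "0 < r" "r < 1" "0 < k"
  shows "((\<lambda>t. h (circlepath 0 r t) * circlepath 0 r t ^ k) has_integral 0) {0..1}"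
proof -
  have "((\<lambda>u. h u * u ^ (k - 1)) has_contour_integral 0) (circlepath 0 r)"
    by (rule Cauchy_theorem_convex_simple[of _ "ball 0 1"])
       (use assms in \<open>auto intro!: holomorphic_intros\<close>)
  then have "((\<lambda>u. h u * u ^ k / u) has_contour_integral 0) (circlepath 0 r)"
    by (rule has_contour_integral_eq)
      (use assms in \<open>auto simp: path_image_circlepath_nonneg power_eq_if\<close>)
  then show ?thesis
    using \<open>0 < r\<close> has_contour_integral_circlepath_0_iff[of r "\<lambda>u. h u * u ^ k" 0] by simp
qed

lemma caratheodory_taylor_coeff_bound_radius:
  assumes hol: "h holomorphic_on ball 0 1" and pos: "\<And>z. z \<in> ball 0 1 \<Longrightarrow> Re (h z) > 0"
    and r: "0 < r" "r < 1" and "0 < k"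
  shows "cmod (taylor_coeff h k) * r ^ k \<le> 2 * Re (h 0)"
proof -
  define c where "c = circlepath 0 r"
  have norm_c: "cmod (c t) = r" for t
    using r by (simp add: c_def circlepath norm_mult)
  have c_nz: "c t \<noteq> 0" for t
    using norm_c[of t] r by auto
  have cnj_c: "cnj (c t) = r\<^sup>2 / c t" for t
    using complex_norm_square[of "c t"] c_nz[of t] by (simp add: norm_c field_simps)
  (* On the circle cnj z = r^2 / z, so the vanishing of the next integral makes the coefficient
     integral of h equal to that of 2 Re h, which is dominated by the mean value 2 Re (h 0). *)
  have "((\<lambda>t. h (c t) * c t ^ k) has_integral 0) {0..1}"
    unfolding c_def using circlepath_integral_times_power_eq_0[OF hol r \<open>0 < k\<close>] .
  then have "((\<lambda>t. r\<^sup>2 ^ k * (cnj (h (c t)) / c t ^ k)) has_integral 0) {0..1}"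
    using has_integral_cnj[of "\<lambda>t. h (c t) * c t ^ k" 0 "{0..1}"]
    by (simp add: o_def cnj_c power_divide mult.commute)
  then have "((\<lambda>t. cnj (h (c t)) / c t ^ k) has_integral 0) {0..1}"
    using r by (subst (asm) has_integral_mult_right_iff) auto
  from has_integral_add[OF circlepath_integral_taylor_coeff[OF hol r, of k, folded c_def] this]
  have Re_int: "((\<lambda>t. 2 * Re (h (c t)) / c t ^ k) has_integral taylor_coeff h k) {0..1}"
    by (simp add: add_divide_distrib[symmetric] complex_add_cnj)
  have "((\<lambda>t. h (c t)) has_integral h 0) {0..1}"
    using circlepath_integral_taylor_coeff[OF hol r, of 0] by (simp add: c_def taylor_coeff_def)
  then have mean: "((\<lambda>t. 2 * Re (h (c t)) / r ^ k) has_integral 2 * Re (h 0) / r ^ k) {0..1}"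
    by (intro has_integral_divide has_integral_mult_right has_integral_Re)
  have "cmod (2 * Re (h (c t)) / c t ^ k) \<le> 2 * Re (h (c t)) / r ^ k" for t
    using pos[of "c t"] r by (simp add: norm_c norm_divide norm_power)
  then have "cmod (integral {0..1} (\<lambda>t. 2 * Re (h (c t)) / c t ^ k))
      \<le> integral {0..1} (\<lambda>t. 2 * Re (h (c t)) / r ^ k)"
    using Re_int mean by (intro integral_norm_bound_integral) auto
  then have "cmod (taylor_coeff h k) \<le> 2 * Re (h 0) / r ^ k"
    unfolding integral_unique[OF Re_int] integral_unique[OF mean] .
  then show ?thesis
    using r by (simp add: field_simps)
qed

lemma caratheodory_taylor_coeff_bound:
  assumes hol: "h holomorphic_on ball 0 1" and pos: "\<And>z. z \<in> ball 0 1 \<Longrightarrow> Re (h z) > 0"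
    and "0 < k"
  shows "cmod (taylor_coeff h k) \<le> 2 * Re (h 0)"
proof -
  have "((\<lambda>r. cmod (taylor_coeff h k) * r ^ k) \<longlongrightarrow> cmod (taylor_coeff h k) * 1 ^ k) (at_left 1)"
    by (intro tendsto_intros)
  moreover have "eventually (\<lambda>r. r \<in> {0<..<1}) (at_left (1::real))"
    by (rule eventually_at_left_real) simp
  then have "eventually (\<lambda>r. cmod (taylor_coeff h k) * r ^ k \<le> 2 * Re (h 0)) (at_left (1::real))"
    by eventually_elim
      (use caratheodory_taylor_coeff_bound_radius[OF hol pos] \<open>0 < k\<close> in auto)
  ultimately show ?thesis
    using tendsto_le[OF trivial_limit_at_left_real tendsto_const] by fastforce
qed

lemma higher_deriv_ident_mult_at_0:
  assumes "g holomorphic_on S" "open S" "0 \<in> S"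
  shows "(deriv ^^ n) (\<lambda>w. w * g w) 0 = of_nat n * (deriv ^^ (n - 1)) g 0"
proof (cases n)
  case (Suc m)
  have "(deriv ^^ n) (\<lambda>w. w * g w) 0
      = (\<Sum>i = 0..Suc m.
          of_nat (Suc m choose i) * (deriv ^^ i) (\<lambda>w. w) 0 * (deriv ^^ (Suc m - i)) g 0)"
    unfolding Suc by (rule higher_deriv_mult[OF _ assms]) (rule holomorphic_intros)
  also have "\<dots> = of_nat n * (deriv ^^ (n - 1)) g 0"
    unfolding Suc sum.atLeast0_atMost_Suc_shift
    by (simp add: sum.atLeast_Suc_atMost del: funpow.simps)
  finally show ?thesis .
qed simp

lemma taylor_coeff_recurrence:
  fixes f q :: "complex \<Rightarrow> complex"
  assumes holf: "f holomorphic_on S" and holq: "q holomorphic_on S" and S: "open S" "0 \<in> S"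
    and eq: "\<And>z. z \<in> S \<Longrightarrow> z * (deriv ^^ 2) f z = q z * deriv f z"
  shows "of_nat (n * Suc n) * taylor_coeff f (Suc n)
    = (\<Sum>i = 0..n. of_nat (Suc n - i) * taylor_coeff q i * taylor_coeff f (Suc n - i))"
proof -
  have hol1: "deriv f holomorphic_on S" and hol2: "(deriv ^^ 2) f holomorphic_on S"
    using holf S by (auto intro: holomorphic_deriv holomorphic_higher_deriv)
  have coeff: "(deriv ^^ k) g 0 = fact k * taylor_coeff g k" for g :: "complex \<Rightarrow> complex" and k
    by (simp add: taylor_coeff_def)
  have deriv_deriv2: "(deriv ^^ (n - 1)) ((deriv ^^ 2) f) = (deriv ^^ Suc n) f" if "n > 0"
    using that by (simp add: funpow_add[symmetric, THEN fun_cong, unfolded o_def])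
  have "fact n * (of_nat (n * Suc n) * taylor_coeff f (Suc n)) = of_nat n * (deriv ^^ Suc n) f 0"
    unfolding coeff fact_Suc by (simp only: of_nat_mult of_nat_fact ac_simps)
  also have "\<dots> = (deriv ^^ n) (\<lambda>w. w * (deriv ^^ 2) f w) 0"
    using higher_deriv_ident_mult_at_0[OF hol2 S, of n] deriv_deriv2 by (cases "n = 0") auto
  also have "\<dots> = (deriv ^^ n) (\<lambda>w. q w * deriv f w) 0"
    by (rule higher_deriv_transform_within_open)
      (use hol1 hol2 holq S eq in \<open>auto intro!: holomorphic_intros\<close>)
  also have "\<dots> = (\<Sum>i = 0..n.
      of_nat (n choose i) * (deriv ^^ i) q 0 * (deriv ^^ Suc (n - i)) f 0)"
    using higher_deriv_mult[OF holq hol1 S] by (simp add: funpow_Suc_right del: funpow.simps)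
  also have "\<dots> = fact n
      * (\<Sum>i = 0..n. of_nat (Suc n - i) * taylor_coeff q i * taylor_coeff f (Suc n - i))"
    unfolding sum_distrib_left
  proof (rule sum.cong)
    fix i assume "i \<in> {0..n}"
    then have fact_n: "fact n = fact i * fact (n - i) * (of_nat (n choose i) :: complex)"
      using binomial_fact_lemma[of i n] by (metis atLeastAtMost_iff of_nat_fact of_nat_mult)
    have Suc_diff: "Suc n - i = Suc (n - i)"
      using \<open>i \<in> {0..n}\<close> by simp
    show "of_nat (n choose i) * (deriv ^^ i) q 0 * (deriv ^^ Suc (n - i)) f 0
        = fact n * (of_nat (Suc n - i) * taylor_coeff q i * taylor_coeff f (Suc n - i))"
      unfolding coeff fact_n Suc_diff fact_Suc by (simp only: ac_simps)
  qed simp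
  finally show ?thesis
    by simp
qed

lemma z_f''_div_f'_holomorphic:
  assumes "f holomorphic_on S" "open S" "\<And>z. z \<in> S \<Longrightarrow> deriv f z \<noteq> 0"
  shows "(\<lambda>z. z * (deriv ^^ 2) f z / deriv f z) holomorphic_on S"
  using assms by (auto intro!: holomorphic_intros holomorphic_deriv holomorphic_higher_deriv)

lemma taylor_coeff_z_f''_div_f'_bound:
  fixes f :: "complex \<Rightarrow> complex" and \<alpha> :: real
  assumes holf: "f holomorphic_on ball 0 1"
    and nz: "\<And>z. z \<in> ball 0 1 \<Longrightarrow> deriv f z \<noteq> 0"
    and convex: "\<And>z. z \<in> ball 0 1 \<Longrightarrow> Re (1 + z * (deriv ^^ 2) f z / deriv f z) > \<alpha>"
    and "0 < k"
  shows "cmod (taylor_coeff (\<lambda>z. z * (deriv ^^ 2) f z / deriv f z) k) \<le> 2 * (1 - \<alpha>)"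
proof -
  define q where "q = (\<lambda>z. z * (deriv ^^ 2) f z / deriv f z)"
  have holq: "q holomorphic_on ball 0 1"
    unfolding q_def by (rule z_f''_div_f'_holomorphic[OF holf _ nz]) simp
  have "(deriv ^^ k) (\<lambda>z. q z + (1 - \<alpha>)) 0 = (deriv ^^ k) q 0"
    using higher_deriv_add[OF holq, where g = "\<lambda>_. 1 - of_real \<alpha>" and z = 0 and n = k] \<open>0 < k\<close>
    by simp
  then have "taylor_coeff (\<lambda>z. q z + (1 - \<alpha>)) k = taylor_coeff q k"
    by (simp add: taylor_coeff_def)
  moreover have "Re (q z + (1 - \<alpha>)) > 0" if "z \<in> ball 0 1" for z
    using convex[OF that] by (simp add: q_def)
  then have "cmod (taylor_coeff (\<lambda>z. q z + (1 - \<alpha>)) k) \<le> 2 * Re (q 0 + (1 - \<alpha>))"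
    by (intro caratheodory_taylor_coeff_bound)
      (use holq \<open>0 < k\<close> in \<open>auto intro!: holomorphic_intros\<close>)
  ultimately show ?thesis
    by (simp add: q_def)
qed

lemma taylor_coeff_2_3_4_recurrence:
  fixes f :: "complex \<Rightarrow> complex"
  assumes holf: "f holomorphic_on ball 0 1" and "deriv f 0 = 1"
    and nz: "\<And>z. z \<in> ball 0 1 \<Longrightarrow> deriv f z \<noteq> 0"
  defines "c \<equiv> taylor_coeff (\<lambda>z. z * (deriv ^^ 2) f z / deriv f z)"
  shows "2 * taylor_coeff f 2 = c 1"
    and "6 * taylor_coeff f 3 = 2 * c 1 * taylor_coeff f 2 + c 2"
    and "12 * taylor_coeff f 4 = 3 * c 1 * taylor_coeff f 3 + 2 * c 2 * taylor_coeff f 2 + c 3"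
proof -
  define q where "q = (\<lambda>z. z * (deriv ^^ 2) f z / deriv f z)"
  have holq: "q holomorphic_on ball 0 1"
    unfolding q_def by (rule z_f''_div_f'_holomorphic[OF holf _ nz]) simp
  have rec: "of_nat (n * Suc n) * taylor_coeff f (Suc n)
      = (\<Sum>i = 0..n. of_nat (Suc n - i) * c i * taylor_coeff f (Suc n - i))" for n
    unfolding c_def q_def[symmetric]
    by (rule taylor_coeff_recurrence[OF holf holq]) (use nz in \<open>auto simp: q_def\<close>)
  have "taylor_coeff f 1 = 1" "c 0 = 0"
    using \<open>deriv f 0 = 1\<close> by (simp_all add: c_def taylor_coeff_def)
  then show "2 * taylor_coeff f 2 = c 1"
    and "6 * taylor_coeff f 3 = 2 * c 1 * taylor_coeff f 2 + c 2"
    and "12 * taylor_coeff f 4 = 3 * c 1 * taylor_coeff f 3 + 2 * c 2 * taylor_coeff f 2 + c 3"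
    using rec[of 1] rec[of 2] rec[of 3] by (simp_all add: eval_nat_numeral)
qed

lemma convex_of_order_taylor_coeff_3_4_bounds:
  fixes f :: "complex \<Rightarrow> complex" and \<alpha> :: real
  assumes holf: "f holomorphic_on ball 0 1" and "deriv f 0 = 1"
    and nz: "\<And>z. z \<in> ball 0 1 \<Longrightarrow> deriv f z \<noteq> 0"
    and convex: "\<And>z. z \<in> ball 0 1 \<Longrightarrow> Re (1 + z * (deriv ^^ 2) f z / deriv f z) > \<alpha>"
  shows "cmod (taylor_coeff f 3) \<le> (1 - \<alpha>) * (3 - 2 * \<alpha>) / 3"
    and "cmod (taylor_coeff f 4) \<le> (1 - \<alpha>) * (2 - \<alpha>) * (3 - 2 * \<alpha>) / 6"
proof -
  define a where "a = taylor_coeff f"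
  define c where "c = taylor_coeff (\<lambda>z. z * (deriv ^^ 2) f z / deriv f z)"
  note a2_a3_a4 = taylor_coeff_2_3_4_recurrence[OF holf \<open>deriv f 0 = 1\<close> nz, folded a_def c_def]
  have c1: "cmod (c 1) \<le> 2 * (1 - \<alpha>)" and c2: "cmod (c 2) \<le> 2 * (1 - \<alpha>)"
    and c3: "cmod (c 3) \<le> 2 * (1 - \<alpha>)"
    unfolding c_def by (intro taylor_coeff_z_f''_div_f'_bound[OF holf nz convex]; simp)+
  then have "0 \<le> 1 - \<alpha>"
    using norm_ge_zero[of "c 1"] by (smt (verit))
  have n2: "cmod (a 2) \<le> 1 - \<alpha>"
    using a2_a3_a4(1) c1 by (auto simp: norm_mult dest: arg_cong[of _ _ cmod])
  have "6 * cmod (a 3) \<le> 2 * cmod (c 1) * cmod (a 2) + cmod (c 2)"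
    using norm_triangle_ineq[of "2 * c 1 * a 2" "c 2"] arg_cong[OF a2_a3_a4(2), of cmod] by (simp add: norm_mult)
  also have "\<dots> \<le> 2 * (2 * (1 - \<alpha>)) * (1 - \<alpha>) + 2 * (1 - \<alpha>)"
    using c1 c2 n2 \<open>0 \<le> 1 - \<alpha>\<close> by (intro add_mono mult_mono) auto
  finally have n3: "cmod (a 3) \<le> (1 - \<alpha>) * (3 - 2 * \<alpha>) / 3"
    by (simp add: algebra_simps)
  have "12 * cmod (a 4) \<le> 3 * cmod (c 1) * cmod (a 3) + 2 * cmod (c 2) * cmod (a 2) + cmod (c 3)"
    using norm_triangle_ineq[of "3 * c 1 * a 3 + 2 * c 2 * a 2" "c 3"]
      norm_triangle_ineq[of "3 * c 1 * a 3" "2 * c 2 * a 2"] arg_cong[OF a2_a3_a4(3), of cmod]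
    by (simp add: norm_mult)
  also have "\<dots> \<le> 3 * (2 * (1 - \<alpha>)) * ((1 - \<alpha>) * (3 - 2 * \<alpha>) / 3)
      + 2 * (2 * (1 - \<alpha>)) * (1 - \<alpha>) + 2 * (1 - \<alpha>)"
    using c1 c2 c3 n2 n3 \<open>0 \<le> 1 - \<alpha>\<close> by (intro add_mono mult_mono) auto
  also have "\<dots> = 12 * ((1 - \<alpha>) * (2 - \<alpha>) * (3 - 2 * \<alpha>) / 6)"
    by (simp add: field_simps)
  finally show "cmod (taylor_coeff f 4) \<le> (1 - \<alpha>) * (2 - \<alpha>) * (3 - 2 * \<alpha>) / 6"
    by (simp add: a_def)
  show "cmod (taylor_coeff f 3) \<le> (1 - \<alpha>) * (3 - 2 * \<alpha>) / 3"
    using n3 by (simp add: a_def)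
qed

theorem corollary2:
  fixes f :: "complex \<Rightarrow> complex" and \<alpha> :: real
  assumes "0 \<le> \<alpha>" and "\<alpha> \<le> 1"
    and "f holomorphic_on ball 0 1"
    and "f 0 = 0" and "deriv f 0 = 1"
    and "\<And>z. z \<in> ball 0 1 \<Longrightarrow> deriv f z \<noteq> 0"
    and "\<And>z. z \<in> ball 0 1 \<Longrightarrow>
           Re (1 + z * (deriv ^^ 2) f z / deriv f z) > \<alpha>"
  shows "cmod ((taylor_coeff f 3)\<^sup>2 - (taylor_coeff f 4)\<^sup>2)
         \<le> (1 - \<alpha>)\<^sup>2 * (3 - 2 * \<alpha>)\<^sup>2 / 9
            + (1 - \<alpha>)\<^sup>2 * (2 - \<alpha>)\<^sup>2 * (3 - 2 * \<alpha>)\<^sup>2 / 36"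
proof -
  note bounds = convex_of_order_taylor_coeff_3_4_bounds[OF assms(3,5,6,7)]
  have "cmod ((taylor_coeff f 3)\<^sup>2 - (taylor_coeff f 4)\<^sup>2)
      \<le> (cmod (taylor_coeff f 3))\<^sup>2 + (cmod (taylor_coeff f 4))\<^sup>2"
    using norm_triangle_ineq4[of "(taylor_coeff f 3)\<^sup>2" "(taylor_coeff f 4)\<^sup>2"]
    by (simp add: norm_power)
  also have "\<dots> \<le> ((1 - \<alpha>) * (3 - 2 * \<alpha>) / 3)\<^sup>2 + ((1 - \<alpha>) * (2 - \<alpha>) * (3 - 2 * \<alpha>) / 6)\<^sup>2"
    using bounds by (intro add_mono power_mono) auto
  also have "\<dots> = (1 - \<alpha>)\<^sup>2 * (3 - 2 * \<alpha>)\<^sup>2 / 9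
      + (1 - \<alpha>)\<^sup>2 * (2 - \<alpha>)\<^sup>2 * (3 - 2 * \<alpha>)\<^sup>2 / 36"
    by (simp add: power_mult_distrib power_divide)
  finally show ?thesis .
qed

end
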